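(* Let $E,F$ be Banach spaces, $a\in E$, $1\le p<\infty$, and $f:E\to F$. (i) If $F$ has type $q$ and $f$ is absolutely $(q;p)$-summing at $a$, then $f$ is almost $p$-summing at $a$. (ii) If $F$ has finite cotype $r$ and $f$ is almost $p$-summing at $a$, then $f$ is absolutely $(r;p)$-summing at $a$.
   Context: $(r_j)$ are the Rademacher functions. For a finite sequence $(x_j)_{j=1}^k$ in $E$, $\Vert(x_{j})_{j=1}^k\Vert_{w,p}:=\sup_{\varphi\in B_{E'}}(\sum_{j=1}^k|\varphi(x_{j})|^{p})^{1/p}$. $f$ is absolutely $(s;p)$-summing at $a$ if there exist $M_a,\delta_a,r_a>0$ with $\sum_{j=1}^{k}\Vert f(a+x_{j})-f(a)\Vert^{s}\leq M_{a}\Vert(x_{j})_{j=1}^{k}\Vert_{w,p}^{r_{a}}$ whenever $\Vert(x_{j})_{j=1}^{k}\Vert_{w,p}<\delta_{a}$. $f$ is almost $p$-summing at $a$ if there exist $C_a,\epsilon_a,r_a>0$ with $(\int_{0}^{1}\Vert\sum_{j=1}^{k}(f(a+x_{j})-f(a))r_{j}(t)\Vert^{2}dt)^{1/2}\leq C_{a}\Vert(x_{j})_{j=1}^{k}\Vert_{w,p}^{r_{a}}$ whenever $\Vert(x_{j})_{j=1}^{k}\Vert_{w,p}<\epsilon_{a}$ (for all $k$ and $x_1,\dots,x_k\in E$). *)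

theory Defs
  imports "HOL-Analysis.Analysis"
begin

definition rademacher :: "nat \<Rightarrow> real \<Rightarrow> real" where
  "rademacher j t = sgn (sin (2 ^ j * pi * t))"

definition rad_avg :: "nat \<Rightarrow> (nat \<Rightarrow> 'b::real_normed_vector) \<Rightarrow> real" where
  "rad_avg k y = sqrt (LINT t:{0..1}|lborel. (norm (\<Sum>j=1..k. rademacher j t *\<^sub>R y j)) ^ 2)"

definition weak_norm :: "real \<Rightarrow> nat \<Rightarrow> (nat \<Rightarrow> 'a::real_normed_vector) \<Rightarrow> real" where
  "weak_norm p k x = (SUP \<phi>\<in>{\<phi>::'a \<Rightarrow>\<^sub>L real. norm \<phi> \<le> 1}.
      (\<Sum>j=1..k. \<bar>blinfun_apply \<phi> (x j)\<bar> powr p) powr (1 / p))"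

definition has_type :: "'b::real_normed_vector itself \<Rightarrow> real \<Rightarrow> bool" where
  "has_type (_::'b itself) q \<longleftrightarrow> 1 \<le> q \<and> q \<le> 2 \<and>
     (\<exists>C. \<forall>k (y::nat \<Rightarrow> 'b).
        rad_avg k y \<le> C * (\<Sum>j=1..k. norm (y j) powr q) powr (1 / q))"

definition has_finite_cotype :: "'b::real_normed_vector itself \<Rightarrow> real \<Rightarrow> bool" where
  "has_finite_cotype (_::'b itself) r \<longleftrightarrow> 2 \<le> r \<and>
     (\<exists>C. \<forall>k (y::nat \<Rightarrow> 'b).
        (\<Sum>j=1..k. norm (y j) powr r) powr (1 / r) \<le> C * rad_avg k y)"

definition abs_summing_at ::
    "real \<Rightarrow> real \<Rightarrow> ('a::real_normed_vector \<Rightarrow> 'b::real_normed_vector) \<Rightarrow> 'a \<Rightarrow> bool" where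
  "abs_summing_at s p f a \<longleftrightarrow> (\<exists>M \<delta> ra. M > 0 \<and> \<delta> > 0 \<and> ra > 0 \<and>
     (\<forall>k (x::nat \<Rightarrow> 'a). weak_norm p k x < \<delta> \<longrightarrow>
        (\<Sum>j=1..k. norm (f (a + x j) - f a) powr s) \<le> M * weak_norm p k x powr ra))"

definition almost_summing_at ::
    "real \<Rightarrow> ('a::real_normed_vector \<Rightarrow> 'b::real_normed_vector) \<Rightarrow> 'a \<Rightarrow> bool" where
  "almost_summing_at p f a \<longleftrightarrow> (\<exists>C \<epsilon> ra. C > 0 \<and> \<epsilon> > 0 \<and> ra > 0 \<and>
     (\<forall>k (x::nat \<Rightarrow> 'a). weak_norm p k x < \<epsilon> \<longrightarrow>
        rad_avg k (\<lambda>j. f (a + x j) - f a) \<le> C * weak_norm p k x powr ra))"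

end

theory Submission
  imports Defs
begin

text \<open>Both parts are a change of exponent. The type (cotype) inequality compares the
  Rademacher average of the increments \<open>f (a + x\<^sub>j) - f a\<close> with their \<open>\<ell>\<^sub>q\<close>- (\<open>\<ell>\<^sub>r\<close>-) norm, and
  raising the given estimate by the weak \<open>p\<close>-norm to the power \<open>1/q\<close> (respectively \<open>r\<close>)
  yields an estimate of the same shape, with the same radius and a rescaled exponent.\<close>

lemma rad_avg_nonneg: "0 \<le> rad_avg k y"
  unfolding rad_avg_def set_lebesgue_integral_def
  by (intro real_sqrt_ge_zero integral_nonneg) (auto simp: indicator_def)

lemma has_typeE:
  fixes q :: real
  assumes "has_type TYPE('b::real_normed_vector) q"
  obtains C where "C > 0" "1 \<le> q"
    "\<And>k (y :: nat \<Rightarrow> 'b). rad_avg k y \<le> C * (\<Sum>j=1..k. norm (y j) powr q) powr (1 / q)"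
proof -
  from assms obtain C where "1 \<le> q"
    and C: "\<And>k (y :: nat \<Rightarrow> 'b). rad_avg k y \<le> C * (\<Sum>j=1..k. norm (y j) powr q) powr (1 / q)"
    unfolding has_type_def by blast
  have "rad_avg k y \<le> max C 1 * (\<Sum>j=1..k. norm (y j) powr q) powr (1 / q)" for k and y :: "nat \<Rightarrow> 'b"
    using C[where k = k and y = y] by (smt (verit) mult_right_mono powr_ge_zero)
  with that[of "max C 1"] \<open>1 \<le> q\<close> show thesis by simp
qed

lemma has_finite_cotypeE:
  fixes r :: real
  assumes "has_finite_cotype TYPE('b::real_normed_vector) r"
  obtains C where "C > 0" "2 \<le> r"
    "\<And>k (y :: nat \<Rightarrow> 'b). (\<Sum>j=1..k. norm (y j) powr r) powr (1 / r) \<le> C * rad_avg k y"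
proof -
  from assms obtain C where "2 \<le> r"
    and C: "\<And>k (y :: nat \<Rightarrow> 'b). (\<Sum>j=1..k. norm (y j) powr r) powr (1 / r) \<le> C * rad_avg k y"
    unfolding has_finite_cotype_def by blast
  have "(\<Sum>j=1..k. norm (y j) powr r) powr (1 / r) \<le> max C 1 * rad_avg k y" for k and y :: "nat \<Rightarrow> 'b"
    using C[where k = k and y = y] rad_avg_nonneg[where k = k and y = y] by (smt (verit) mult_right_mono)
  with that[of "max C 1"] \<open>2 \<le> r\<close> show thesis by simp
qed

lemma powr_le_mult_powr:
  fixes S M w e ra :: real
  assumes "0 \<le> S" "0 \<le> M" "0 < e" "S \<le> M * w powr ra"
  shows "S powr e \<le> M powr e * w powr (ra * e)"
proof -
  have "S powr e \<le> (M * w powr ra) powr e"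
    using assms by (intro powr_mono2) auto
  also have "\<dots> = M powr e * w powr (ra * e)"
    using assms(2) by (simp add: powr_mult powr_powr)
  finally show ?thesis .
qed

lemma almost_summing_at_if_type:
  fixes f :: "'a::real_normed_vector \<Rightarrow> 'b::real_normed_vector"
  assumes "has_type TYPE('b) q" "abs_summing_at q p f a"
  shows "almost_summing_at p f a"
proof -
  obtain C where "C > 0" "1 \<le> q"
    and type: "\<And>k (y :: nat \<Rightarrow> 'b). rad_avg k y \<le> C * (\<Sum>j=1..k. norm (y j) powr q) powr (1 / q)"
    using has_typeE[OF assms(1)] by blast
  obtain M \<delta> ra where "M > 0" "\<delta> > 0" "ra > 0"
    and summing: "\<And>k (x :: nat \<Rightarrow> 'a). weak_norm p k x < \<delta> \<Longrightarrow>
        (\<Sum>j=1..k. norm (f (a + x j) - f a) powr q) \<le> M * weak_norm p k x powr ra"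
    using assms(2) unfolding abs_summing_at_def by blast
  have "rad_avg k (\<lambda>j. f (a + x j) - f a) \<le> C * M powr (1 / q) * weak_norm p k x powr (ra / q)"
    if "weak_norm p k x < \<delta>" for k and x :: "nat \<Rightarrow> 'a"
  proof -
    let ?S = "\<Sum>j=1..k. norm (f (a + x j) - f a) powr q"
    have "?S powr (1 / q) \<le> M powr (1 / q) * weak_norm p k x powr (ra / q)"
      using powr_le_mult_powr[OF _ _ _ summing[OF that], of "1 / q"] \<open>M > 0\<close> \<open>1 \<le> q\<close>
      by (simp add: sum_nonneg)
    then show ?thesis
      using type[where k = k and y = "\<lambda>j. f (a + x j) - f a"] \<open>C > 0\<close>
      by (smt (verit) mult.assoc mult_left_mono)
  qed
  then show ?thesis
    unfolding almost_summing_at_def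
    using \<open>C > 0\<close> \<open>M > 0\<close> \<open>\<delta> > 0\<close> \<open>ra > 0\<close> \<open>1 \<le> q\<close>
    by (intro exI[of _ "C * M powr (1 / q)"] exI[of _ \<delta>] exI[of _ "ra / q"]) auto
qed

lemma abs_summing_at_if_finite_cotype:
  fixes f :: "'a::real_normed_vector \<Rightarrow> 'b::real_normed_vector"
  assumes "has_finite_cotype TYPE('b) r" "almost_summing_at p f a"
  shows "abs_summing_at r p f a"
proof -
  obtain C where "C > 0" "2 \<le> r"
    and cotype: "\<And>k (y :: nat \<Rightarrow> 'b). (\<Sum>j=1..k. norm (y j) powr r) powr (1 / r) \<le> C * rad_avg k y"
    using has_finite_cotypeE[OF assms(1)] by blast
  obtain D \<epsilon> ra where "D > 0" "\<epsilon> > 0" "ra > 0"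
    and almost: "\<And>k (x :: nat \<Rightarrow> 'a). weak_norm p k x < \<epsilon> \<Longrightarrow>
        rad_avg k (\<lambda>j. f (a + x j) - f a) \<le> D * weak_norm p k x powr ra"
    using assms(2) unfolding almost_summing_at_def by blast
  have "(\<Sum>j=1..k. norm (f (a + x j) - f a) powr r) \<le> (C * D) powr r * weak_norm p k x powr (ra * r)"
    if "weak_norm p k x < \<epsilon>" for k and x :: "nat \<Rightarrow> 'a"
  proof -
    let ?S = "\<Sum>j=1..k. norm (f (a + x j) - f a) powr r"
    have "?S powr (1 / r) \<le> C * D * weak_norm p k x powr ra"
      using cotype[where k = k and y = "\<lambda>j. f (a + x j) - f a"] almost[OF that] \<open>C > 0\<close>
      by (smt (verit) mult.assoc mult_left_mono)
    from powr_le_mult_powr[OF _ _ _ this, of r] \<open>C > 0\<close> \<open>D > 0\<close> \<open>2 \<le> r\<close>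
    show ?thesis
      by (simp add: powr_powr sum_nonneg)
  qed
  then show ?thesis
    unfolding abs_summing_at_def
    using \<open>C > 0\<close> \<open>D > 0\<close> \<open>\<epsilon> > 0\<close> \<open>ra > 0\<close> \<open>2 \<le> r\<close>
    by (intro exI[of _ "(C * D) powr r"] exI[of _ \<epsilon>] exI[of _ "ra * r"]) auto
qed

theorem mainTheorem6:
  fixes f :: "'a::banach \<Rightarrow> 'b::banach" and a :: 'a and p q r :: real
  assumes "1 \<le> p"
  shows "(has_type TYPE('b) q \<and> abs_summing_at q p f a \<longrightarrow> almost_summing_at p f a)
       \<and> (has_finite_cotype TYPE('b) r \<and> almost_summing_at p f a \<longrightarrow> abs_summing_at r p f a)"
  using almost_summing_at_if_type abs_summing_at_if_finite_cotype by blast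

end
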